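(* Let $\mathbb P$ be the law of a stationary simple point process on $\mathbb R^d$ with finite positive intensity $m$, and let $\gamma>0$. The following are equivalent: (i) $\mathbb E_0[\xi(\Lambda_L(z))^\gamma]<\infty$ for every $L>0$ and $z\in\mathbb R^d$; (ii) $\rho_{1+\gamma}<\infty$.
   Context: $\mathcal N$ = locally finite subsets of $\mathbb R^d$, identified with counting measures ($\xi(A)=\#(\xi\cap A)$); $\tau_x\xi=\xi-x$; stationarity: $\mathbb P(\tau_xA)=\mathbb P(A)$. Intensity $m=\mathbb E[\xi([0,1]^d)]$. $\Lambda_L(z)=z+[-L,L]^d$. $\rho_\gamma:=\mathbb E[\xi([0,1]^d)^\gamma]$. Palm distribution $\mathbb P_0(A)=\frac1m\int d\mathbb P(\xi)\sum_{x\in\xi\cap[0,1]^d}\mathbf 1_A(\tau_x\xi)$, expectation $\mathbb E_0$. *)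

theory Defs
  imports "HOL-Probability.Probability"
begin

definition loc_finite_configs :: "'a::euclidean_space set set" where
  "loc_finite_configs = {\<xi>. \<forall>K. compact K \<longrightarrow> finite (\<xi> \<inter> K)}"

definition npts :: "'a set \<Rightarrow> 'a set \<Rightarrow> nat" where
  "npts \<xi> A = card (\<xi> \<inter> A)"

definition config_space :: "'a::euclidean_space set measure" where
  "config_space = sigma loc_finite_configs
     {{\<xi>\<in>loc_finite_configs. npts \<xi> B = k} | B k. B \<in> sets borel \<and> bounded B}"

definition shift :: "'a::euclidean_space \<Rightarrow> 'a set \<Rightarrow> 'a set" where
  "shift x \<xi> = (\<lambda>y. y - x) ` \<xi>"

definition unit_cube :: "'a::euclidean_space set" where
  "unit_cube = cbox 0 One"

definition Lambda_box :: "real \<Rightarrow> 'a::euclidean_space \<Rightarrow> 'a set" where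
  "Lambda_box L z = cbox (z - L *\<^sub>R One) (z + L *\<^sub>R One)"

definition stationary :: "'a::euclidean_space set measure \<Rightarrow> bool" where
  "stationary P \<longleftrightarrow> (\<forall>x. \<forall>A\<in>sets P. emeasure P (shift x ` A) = emeasure P A)"

definition intensity :: "'a::euclidean_space set measure \<Rightarrow> ennreal" where
  "intensity P = (\<integral>\<^sup>+ \<xi>. ennreal (real (npts \<xi> unit_cube)) \<partial>P)"

definition rho :: "'a::euclidean_space set measure \<Rightarrow> real \<Rightarrow> ennreal" where
  "rho P g = (\<integral>\<^sup>+ \<xi>. ennreal (real (npts \<xi> unit_cube) powr g) \<partial>P)"

definition palm_expectation ::
  "'a::euclidean_space set measure \<Rightarrow> ('a set \<Rightarrow> ennreal) \<Rightarrow> ennreal" where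
  "palm_expectation P f =
     (\<integral>\<^sup>+ \<xi>. (\<Sum>x\<in>\<xi> \<inter> unit_cube. f (shift x \<xi>)) \<partial>P) / intensity P"

end

theory Submission
  imports Defs
begin

text \<open>Write \<open>Q\<close> for the unit cube, so that \<open>m E\<^sub>0[f] = E[\<Sum>\<^bsub>x \<in> \<xi> \<inter> Q\<^esub> f(\<tau>\<^sub>x \<xi>)]\<close> and
  \<open>(\<tau>\<^sub>x \<xi>)(S) = \<xi>(x + S)\<close>. For \<open>x \<in> Q\<close> the window \<open>x + \<Lambda>\<^sub>1(0)\<close> contains \<open>Q\<close>, so summing
  \<open>\<xi>(x + \<Lambda>\<^sub>1(0))\<^sup>\<gamma>\<close> over the \<open>\<xi>(Q)\<close> points of \<open>\<xi> \<inter> Q\<close> gives at least \<open>\<xi>(Q)\<^bsup>1+\<gamma>\<^esup>\<close>; hence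
  \<open>\<rho>\<^bsub>1+\<gamma>\<^esub> \<le> m E\<^sub>0[\<xi>(\<Lambda>\<^sub>1(0))\<^sup>\<gamma>]\<close>. Conversely, the windows \<open>x + \<Lambda>\<^sub>L(z)\<close>, \<open>x \<in> Q\<close>, all lie in
  finitely many translates \<open>k + Q\<close>, \<open>k \<in> K\<close>, so the sum is at most
  \<open>\<xi>(Q) (\<Sum>\<^sub>k \<xi>(k + Q))\<^sup>\<gamma> \<le> \<xi>(Q)\<^bsup>1+\<gamma>\<^esup> + |K|\<^bsup>1+\<gamma>\<^esup> \<Sum>\<^sub>k \<xi>(k + Q)\<^bsup>1+\<gamma>\<^esup>\<close>, and by stationarity
  each term on the right has expectation \<open>\<rho>\<^bsub>1+\<gamma>\<^esub>\<close>.\<close>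

lemma space_config_space: "space config_space = loc_finite_configs"
  unfolding config_space_def by (rule space_measure_of_conv)

lemma space_eq_loc_finite_configs:
  "sets P = sets config_space \<Longrightarrow> space P = loc_finite_configs"
  using sets_eq_imp_space_eq space_config_space by metis

lemma npts_eq_in_config_space:
  assumes "B \<in> sets borel" "bounded B"
  shows "{\<xi>\<in>loc_finite_configs. npts \<xi> B = k} \<in> sets config_space"
  unfolding config_space_def using assms by (intro in_measure_of) blast+

lemma measurable_npts:
  assumes sets: "sets P = sets config_space" and B: "B \<in> sets borel" "bounded B"
  shows "(\<lambda>\<xi>. npts \<xi> B) \<in> measurable P (count_space UNIV)"
  unfolding measurable_count_space_eq2_countable
proof (intro conjI ballI)
  fix k :: nat
  have "(\<lambda>\<xi>. npts \<xi> B) -` {k} \<inter> space P = {\<xi>\<in>loc_finite_configs. npts \<xi> B = k}"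
    using space_eq_loc_finite_configs[OF sets] by auto
  then show "(\<lambda>\<xi>. npts \<xi> B) -` {k} \<inter> space P \<in> sets P"
    using npts_eq_in_config_space[OF B] sets by simp
qed auto

lemma borel_measurable_npts_powr:
  assumes "sets P = sets config_space" "B \<in> sets borel" "bounded B"
  shows "(\<lambda>\<xi>. ennreal (real (npts \<xi> B) powr p)) \<in> borel_measurable P"
  using measurable_npts[OF assms] by (rule measurable_compose) simp

lemma finite_Int_compact_config:
  "\<xi> \<in> loc_finite_configs \<Longrightarrow> compact K \<Longrightarrow> finite (\<xi> \<inter> K)"
  unfolding loc_finite_configs_def by auto

lemma shift_Int: "shift x \<xi> \<inter> A = (\<lambda>y. y - x) ` (\<xi> \<inter> (+) x ` A)"
  unfolding shift_def by force

lemma npts_shift: "npts (shift x \<xi>) A = npts \<xi> ((+) x ` A)"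
  unfolding npts_def shift_Int by (rule card_image) (auto simp: inj_on_def)

lemma shift_in_loc_finite_configs:
  assumes "\<xi> \<in> loc_finite_configs"
  shows "shift x \<xi> \<in> loc_finite_configs"
  unfolding loc_finite_configs_def
proof (intro CollectI allI impI)
  fix K :: "'a set"
  assume "compact K"
  then have "finite (\<xi> \<inter> (+) x ` K)"
    by (intro finite_Int_compact_config[OF assms] compact_translation)
  then show "finite (shift x \<xi> \<inter> K)"
    by (simp add: shift_Int)
qed

lemma shift_shift_uminus: "shift x (shift (-x) \<eta>) = \<eta>"
  unfolding shift_def by (auto simp: image_image)

lemma sets_borel_translation:
  fixes B :: "'a::real_normed_vector set"
  assumes "B \<in> sets borel"
  shows "(+) k ` B \<in> sets borel"
proof -
  have "(+) k ` B = (\<lambda>y. y - k) -` B"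
  proof (intro equalityI subsetI)
    fix y assume "y \<in> (\<lambda>y. y - k) -` B"
    then have "k + (y - k) \<in> (+) k ` B"
      by blast
    then show "y \<in> (+) k ` B"
      by simp
  qed auto
  moreover have "(\<lambda>y. y - k) \<in> borel_measurable borel"
    by (intro borel_measurable_continuous_onI continuous_intros)
  ultimately show ?thesis
    using measurable_sets_borel assms by metis
qed

lemma stationary_distr_npts_translation:
  fixes B :: "'a::euclidean_space set"
  assumes sets: "sets P = sets config_space" and "stationary P"
    and B: "B \<in> sets borel" "bounded B"
  shows "distr P (count_space UNIV) (\<lambda>\<xi>. npts \<xi> ((+) k ` B))
       = distr P (count_space UNIV) (\<lambda>\<xi>. npts \<xi> B)"
proof (rule measure_eqI_countable)
  have kB: "(+) k ` B \<in> sets borel" "bounded ((+) k ` B)"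
    using B by (auto intro: sets_borel_translation bounded_translation)
  fix n :: nat
  define A where "A = {\<xi>\<in>loc_finite_configs. npts \<xi> ((+) k ` B) = n}"
  have "A \<in> sets P"
    unfolding A_def sets using kB by (rule npts_eq_in_config_space)
  have shift_A: "shift k ` A = {\<xi>\<in>loc_finite_configs. npts \<xi> B = n}"
  proof (intro equalityI subsetI)
    fix \<zeta> assume "\<zeta> \<in> shift k ` A"
    then obtain \<xi> where "\<xi> \<in> A" "\<zeta> = shift k \<xi>"
      by blast
    then show "\<zeta> \<in> {\<xi>\<in>loc_finite_configs. npts \<xi> B = n}"
      unfolding A_def by (simp add: shift_in_loc_finite_configs npts_shift)
  next
    fix \<eta> assume \<eta>: "\<eta> \<in> {\<xi>\<in>loc_finite_configs. npts \<xi> B = n}"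
    have "npts (shift (-k) \<eta>) ((+) k ` B) = npts \<eta> B"
      by (simp add: npts_shift image_image)
    with \<eta> have "shift (-k) \<eta> \<in> A"
      unfolding A_def by (simp add: shift_in_loc_finite_configs)
    then show "\<eta> \<in> shift k ` A"
      using shift_shift_uminus[of k \<eta>] by force
  qed
  have "emeasure (distr P (count_space UNIV) (\<lambda>\<xi>. npts \<xi> ((+) k ` B))) {n} = emeasure P A"
    using measurable_npts[OF sets kB]
    by (simp add: emeasure_distr space_eq_loc_finite_configs[OF sets] A_def vimage_def Int_def
        conj_commute)
  also have "\<dots> = emeasure P (shift k ` A)"
    using \<open>stationary P\<close> \<open>A \<in> sets P\<close> unfolding stationary_def by auto
  also have "\<dots> = emeasure (distr P (count_space UNIV) (\<lambda>\<xi>. npts \<xi> B)) {n}"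
    using measurable_npts[OF sets B]
    by (simp add: emeasure_distr space_eq_loc_finite_configs[OF sets] shift_A vimage_def Int_def
        conj_commute)
  finally show "emeasure (distr P (count_space UNIV) (\<lambda>\<xi>. npts \<xi> ((+) k ` B))) {n}
      = emeasure (distr P (count_space UNIV) (\<lambda>\<xi>. npts \<xi> B)) {n}" .
qed auto

lemma stationary_nn_integral_npts_translation:
  fixes B :: "'a::euclidean_space set"
  assumes sets: "sets P = sets config_space" and "stationary P"
    and B: "B \<in> sets borel" "bounded B"
  shows "(\<integral>\<^sup>+\<xi>. h (npts \<xi> ((+) k ` B)) \<partial>P) = (\<integral>\<^sup>+\<xi>. h (npts \<xi> B) \<partial>P)"
proof -
  have kB: "(+) k ` B \<in> sets borel" "bounded ((+) k ` B)"
    using B by (auto intro: sets_borel_translation bounded_translation)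
  show ?thesis
    using nn_integral_distr[OF measurable_npts[OF sets kB], of h]
      nn_integral_distr[OF measurable_npts[OF sets B], of h]
      stationary_distr_npts_translation[OF assms, of k]
    by simp
qed

lemma compact_unit_cube: "compact unit_cube"
  by (simp add: unit_cube_def)

lemma compact_subset_Union_translated_unit_cubes:
  fixes S :: "'a::euclidean_space set"
  assumes "compact S"
  obtains K where "finite K" "S \<subseteq> (\<Union>k\<in>K. (+) k ` unit_cube)"
proof -
  define c :: "'a \<Rightarrow> 'a" where "c y = y - (1/2) *\<^sub>R One" for y
  have centred: "y \<in> box (c y) (c y + One)" for y
    by (auto simp: c_def mem_box inner_diff_left inner_add_left)
  have "S \<subseteq> (\<Union>y\<in>S. box (c y) (c y + One))"
    using centred by blast
  then obtain T where "finite T" "S \<subseteq> (\<Union>y\<in>T. box (c y) (c y + One))"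
    by (rule compactE_image[OF assms open_box])
  moreover have "box (c y) (c y + One) \<subseteq> (+) (c y) ` unit_cube" for y
    using box_subset_cbox[of "c y" "c y + One"]
    by (simp add: unit_cube_def flip: cbox_translation)
  then have "(\<Union>y\<in>T. box (c y) (c y + One)) \<subseteq> (\<Union>k\<in>c ` T. (+) k ` unit_cube)"
    by (simp add: UN_mono)
  ultimately show ?thesis
    using that[of "c ` T"] by blast
qed

lemma translated_Lambda_box_subset:
  assumes "x \<in> unit_cube"
  shows "(+) x ` Lambda_box L z \<subseteq> Lambda_box (L + 1) (z::'a::euclidean_space)"
proof -
  have "0 \<le> x \<bullet> i \<and> x \<bullet> i \<le> 1" if "i \<in> Basis" for i
    using assms that by (simp add: unit_cube_def mem_box)
  moreover have "(+) x ` Lambda_box L z = cbox (x + (z - L *\<^sub>R One)) (x + (z + L *\<^sub>R One))"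
    by (simp add: Lambda_box_def cbox_translation)
  ultimately show ?thesis
    by (simp add: Lambda_box_def subset_box inner_add_left inner_diff_left algebra_simps)
qed

lemma unit_cube_subset_translated_Lambda_box:
  assumes "x \<in> unit_cube"
  shows "unit_cube \<subseteq> (+) x ` Lambda_box 1 (0::'a::euclidean_space)"
proof -
  have "0 \<le> x \<bullet> i \<and> x \<bullet> i \<le> 1" if "i \<in> Basis" for i
    using assms that by (simp add: unit_cube_def mem_box)
  then show ?thesis
    by (simp add: Lambda_box_def unit_cube_def subset_box inner_add_left inner_diff_left
        flip: cbox_translation)
qed

lemma mult_powr_le_powr_add_powr:
  fixes a b g :: real
  assumes "0 \<le> a" "0 \<le> b" "0 \<le> g"
  shows "a * b powr g \<le> a powr (1 + g) + b powr (1 + g)"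
proof (cases "a \<le> b")
  case True
  then have "a * b powr g \<le> b * b powr g"
    by (intro mult_right_mono) auto
  then show ?thesis
    using assms by (simp add: powr_add add_increasing)
next
  case False
  then have "a * b powr g \<le> a * a powr g"
    using assms by (intro mult_left_mono powr_mono2) auto
  then show ?thesis
    using assms by (simp add: powr_add add_increasing2)
qed

lemma powr_le_card_powr_mult_sum_powr:
  fixes a :: "'k \<Rightarrow> real"
  assumes "finite K" "\<And>k. k \<in> K \<Longrightarrow> 0 \<le> a k" "0 \<le> b" "b \<le> sum a K" "0 < p"
  shows "b powr p \<le> real (card K) powr p * (\<Sum>k\<in>K. a k powr p)"
proof (cases "K = {}")
  case True
  then show ?thesis
    using assms by simp
next
  case False
  define M where "M = Max (a ` K)"
  have "M \<in> a ` K" "\<And>k. k \<in> K \<Longrightarrow> a k \<le> M"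
    unfolding M_def using assms False by auto
  then have "0 \<le> M" "sum a K \<le> real (card K) * M"
    using assms sum_bounded_above[of K a M] by auto
  then have "b powr p \<le> real (card K) powr p * M powr p"
    using assms by (simp add: powr_mono2 flip: powr_mult)
  also have "M powr p \<le> (\<Sum>k\<in>K. a k powr p)"
    using \<open>M \<in> a ` K\<close> assms by (auto intro!: member_le_sum)
  then have "real (card K) powr p * M powr p \<le> real (card K) powr p * (\<Sum>k\<in>K. a k powr p)"
    by (intro mult_left_mono) auto
  finally show ?thesis .
qed

text \<open>The integrand of \<open>m E\<^sub>0[\<xi>(S)\<^sup>\<gamma>]\<close>.\<close>
definition palm_sum :: "real \<Rightarrow> 'a::euclidean_space set \<Rightarrow> 'a set \<Rightarrow> ennreal" where
  "palm_sum \<gamma> S \<xi> = (\<Sum>x\<in>\<xi> \<inter> unit_cube. ennreal (real (npts (shift x \<xi>) S) powr \<gamma>))"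

lemma npts_powr_le_palm_sum:
  fixes S :: "'a::euclidean_space set"
  assumes \<xi>: "\<xi> \<in> loc_finite_configs" and "0 \<le> \<gamma>" "compact S"
    and window: "\<And>x. x \<in> unit_cube \<Longrightarrow> unit_cube \<subseteq> (+) x ` S"
  shows "ennreal (real (npts \<xi> unit_cube) powr (1 + \<gamma>)) \<le> palm_sum \<gamma> S \<xi>"
proof -
  have "npts \<xi> unit_cube \<le> npts (shift x \<xi>) S" if "x \<in> unit_cube" for x
    unfolding npts_shift unfolding npts_def using window[OF that]
    by (intro card_mono finite_Int_compact_config[OF \<xi>] compact_translation \<open>compact S\<close>) auto
  then have "of_nat (card (\<xi> \<inter> unit_cube)) * ennreal (real (npts \<xi> unit_cube) powr \<gamma>)
      \<le> palm_sum \<gamma> S \<xi>"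
    using \<open>0 \<le> \<gamma>\<close> unfolding palm_sum_def
    by (intro sum_bounded_below ennreal_leI powr_mono2) auto
  moreover have "of_nat (card (\<xi> \<inter> unit_cube)) * ennreal (real (npts \<xi> unit_cube) powr \<gamma>)
      = ennreal (real (npts \<xi> unit_cube) powr (1 + \<gamma>))"
    by (simp add: npts_def powr_add ennreal_of_nat_eq_real_of_nat flip: ennreal_mult)
  ultimately show ?thesis
    by simp
qed

lemma palm_sum_le_sum_npts_powr:
  fixes S :: "'a::euclidean_space set"
  assumes \<xi>: "\<xi> \<in> loc_finite_configs" and "0 \<le> \<gamma>" "finite K"
    and cover: "\<And>x. x \<in> unit_cube \<Longrightarrow> (+) x ` S \<subseteq> (\<Union>k\<in>K. (+) k ` unit_cube)"
  shows "palm_sum \<gamma> S \<xi>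
    \<le> ennreal (real (npts \<xi> unit_cube) powr (1 + \<gamma>))
      + ennreal (real (card K) powr (1 + \<gamma>))
        * (\<Sum>k\<in>K. ennreal (real (npts \<xi> ((+) k ` unit_cube)) powr (1 + \<gamma>)))"
proof -
  define a where "a k = real (npts \<xi> ((+) k ` unit_cube))" for k
  define b where "b = sum a K"
  have "npts (shift x \<xi>) S \<le> b" if "x \<in> unit_cube" for x
  proof -
    have "npts (shift x \<xi>) S \<le> card (\<Union>k\<in>K. \<xi> \<inter> (+) k ` unit_cube)"
      unfolding npts_shift unfolding npts_def using cover[OF that] \<open>finite K\<close>
      by (intro card_mono finite_UN_I finite_Int_compact_config[OF \<xi>] compact_translation
          compact_unit_cube) auto
    also have "\<dots> \<le> (\<Sum>k\<in>K. card (\<xi> \<inter> (+) k ` unit_cube))"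
      by (rule card_UN_le[OF \<open>finite K\<close>])
    finally show ?thesis
      by (simp add: b_def a_def npts_def flip: of_nat_sum)
  qed
  then have "palm_sum \<gamma> S \<xi> \<le> of_nat (npts \<xi> unit_cube) * ennreal (b powr \<gamma>)"
    using \<open>0 \<le> \<gamma>\<close> unfolding palm_sum_def npts_def
    by (intro sum_bounded_above ennreal_leI powr_mono2) auto
  also have "\<dots> = ennreal (real (npts \<xi> unit_cube) * b powr \<gamma>)"
    by (simp add: ennreal_of_nat_eq_real_of_nat ennreal_mult)
  also have "\<dots> \<le> ennreal (real (npts \<xi> unit_cube) powr (1 + \<gamma>) + b powr (1 + \<gamma>))"
    using \<open>0 \<le> \<gamma>\<close>
    by (intro ennreal_leI mult_powr_le_powr_add_powr) (auto simp: b_def a_def sum_nonneg)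
  also have "\<dots> \<le> ennreal (real (npts \<xi> unit_cube) powr (1 + \<gamma>)
      + real (card K) powr (1 + \<gamma>) * (\<Sum>k\<in>K. a k powr (1 + \<gamma>)))"
    using \<open>0 \<le> \<gamma>\<close> \<open>finite K\<close>
    by (intro ennreal_leI add_left_mono powr_le_card_powr_mult_sum_powr)
      (auto simp: a_def b_def intro: sum_nonneg)
  finally show ?thesis
    by (simp add: a_def ennreal_mult sum_nonneg)
qed

lemma palm_expectation_less_top_iff:
  assumes "0 < intensity P" "intensity P < \<infinity>"
  shows "palm_expectation P f < \<infinity>
    \<longleftrightarrow> (\<integral>\<^sup>+\<xi>. (\<Sum>x\<in>\<xi> \<inter> unit_cube. f (shift x \<xi>)) \<partial>P) < \<infinity>"
proof -
  have "intensity P \<noteq> 0" "intensity P \<noteq> \<infinity>"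
    using assms by auto
  then show ?thesis
    by (simp add: palm_expectation_def top.not_eq_extremum[symmetric] ennreal_divide_eq_top_iff)
qed

lemma rho_le_nn_integral_palm_sum:
  assumes sets: "sets P = sets config_space" and "0 \<le> \<gamma>"
  shows "rho P (1 + \<gamma>) \<le> (\<integral>\<^sup>+\<xi>. palm_sum \<gamma> (Lambda_box 1 (0::'a::euclidean_space)) \<xi> \<partial>P)"
  unfolding rho_def
proof (rule nn_integral_mono)
  fix \<xi> assume "\<xi> \<in> space P"
  then have "\<xi> \<in> loc_finite_configs"
    using space_eq_loc_finite_configs[OF sets] by simp
  then show "ennreal (real (npts \<xi> unit_cube) powr (1 + \<gamma>))
      \<le> palm_sum \<gamma> (Lambda_box 1 (0::'a)) \<xi>"
    using \<open>0 \<le> \<gamma>\<close> unit_cube_subset_translated_Lambda_box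
    by (intro npts_powr_le_palm_sum) (auto simp: Lambda_box_def)
qed

lemma nn_integral_palm_sum_le_rho:
  fixes S :: "'a::euclidean_space set"
  assumes sets: "sets P = sets config_space" and "stationary P" "0 \<le> \<gamma>" "finite K"
    and cover: "\<And>x. x \<in> unit_cube \<Longrightarrow> (+) x ` S \<subseteq> (\<Union>k\<in>K. (+) k ` unit_cube)"
  shows "(\<integral>\<^sup>+\<xi>. palm_sum \<gamma> S \<xi> \<partial>P)
    \<le> (1 + ennreal (real (card K) powr (1 + \<gamma>)) * of_nat (card K)) * rho P (1 + \<gamma>)"
proof -
  define c where "c = ennreal (real (card K) powr (1 + \<gamma>))"
  define f :: "'a set \<Rightarrow> 'a set \<Rightarrow> ennreal"
    where "f B \<xi> = ennreal (real (npts \<xi> B) powr (1 + \<gamma>))" for B \<xi>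
  have f_meas: "f ((+) k ` unit_cube) \<in> borel_measurable P" for k
    unfolding f_def using sets
    by (intro borel_measurable_npts_powr sets_borel_translation bounded_translation
        borel_compact compact_imp_bounded compact_unit_cube)
  have f_rho: "(\<integral>\<^sup>+\<xi>. f ((+) k ` unit_cube) \<xi> \<partial>P) = rho P (1 + \<gamma>)" for k
    unfolding f_def rho_def using sets \<open>stationary P\<close>
    by (rule stationary_nn_integral_npts_translation)
      (auto intro: borel_compact compact_imp_bounded compact_unit_cube)
  have "(\<integral>\<^sup>+\<xi>. palm_sum \<gamma> S \<xi> \<partial>P)
      \<le> (\<integral>\<^sup>+\<xi>. f unit_cube \<xi> + c * (\<Sum>k\<in>K. f ((+) k ` unit_cube) \<xi>) \<partial>P)"
  proof (rule nn_integral_mono)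
    fix \<xi> assume "\<xi> \<in> space P"
    then have "\<xi> \<in> loc_finite_configs"
      using space_eq_loc_finite_configs[OF sets] by simp
    then show "palm_sum \<gamma> S \<xi> \<le> f unit_cube \<xi> + c * (\<Sum>k\<in>K. f ((+) k ` unit_cube) \<xi>)"
      unfolding f_def c_def using assms by (intro palm_sum_le_sum_npts_powr)
  qed
  also have "\<dots> = (\<integral>\<^sup>+\<xi>. f unit_cube \<xi> \<partial>P) + c * (\<Sum>k\<in>K. \<integral>\<^sup>+\<xi>. f ((+) k ` unit_cube) \<xi> \<partial>P)"
    using f_meas[of 0] f_meas \<open>finite K\<close>
    by (simp add: nn_integral_add nn_integral_cmult nn_integral_sum borel_measurable_sum
        del: sum_ennreal)
  also have "\<dots> = (1 + c * of_nat (card K)) * rho P (1 + \<gamma>)"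
    using f_rho[of 0] by (simp add: f_rho distrib_right mult.assoc)
  finally show ?thesis
    unfolding c_def .
qed

lemma nn_integral_palm_sum_Lambda_box_less_top:
  fixes z :: "'a::euclidean_space"
  assumes "sets P = sets config_space" "stationary P" "0 \<le> \<gamma>" "rho P (1 + \<gamma>) < \<infinity>"
  shows "(\<integral>\<^sup>+\<xi>. palm_sum \<gamma> (Lambda_box L z) \<xi> \<partial>P) < \<infinity>"
proof -
  have "compact (Lambda_box (L + 1) z)"
    by (simp add: Lambda_box_def)
  then obtain K where "finite K" and K: "Lambda_box (L + 1) z \<subseteq> (\<Union>k\<in>K. (+) k ` unit_cube)"
    by (rule compact_subset_Union_translated_unit_cubes)
  have "(+) x ` Lambda_box L z \<subseteq> (\<Union>k\<in>K. (+) k ` unit_cube)" if "x \<in> unit_cube" for x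
    using translated_Lambda_box_subset[OF that] K by (rule subset_trans)
  with assms \<open>finite K\<close> have "(\<integral>\<^sup>+\<xi>. palm_sum \<gamma> (Lambda_box L z) \<xi> \<partial>P)
    \<le> (1 + ennreal (real (card K) powr (1 + \<gamma>)) * of_nat (card K)) * rho P (1 + \<gamma>)"
    by (intro nn_integral_palm_sum_le_rho)
  also have "\<dots> < \<infinity>"
    using assms by (simp add: ennreal_mult_less_top of_nat_less_top)
  finally show ?thesis .
qed

theorem lemma8p3:
  fixes P :: "'a::euclidean_space set measure" and \<gamma> :: real
  assumes "prob_space P"
    and "sets P = sets config_space" and "space P = space config_space"
    and "stationary P"
    and "0 < intensity P" and "intensity P < \<infinity>"
    and "0 < \<gamma>"
  shows "(\<forall>L>0. \<forall>z. palm_expectation P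
             (\<lambda>\<xi>. ennreal (real (npts \<xi> (Lambda_box L z)) powr \<gamma>)) < \<infinity>)
         \<longleftrightarrow> rho P (1 + \<gamma>) < \<infinity>"
proof -
  have palm_iff: "palm_expectation P (\<lambda>\<xi>. ennreal (real (npts \<xi> S) powr \<gamma>)) < \<infinity>
      \<longleftrightarrow> (\<integral>\<^sup>+\<xi>. palm_sum \<gamma> S \<xi> \<partial>P) < \<infinity>" for S
    unfolding palm_sum_def by (rule palm_expectation_less_top_iff[OF assms(5,6)])
  show ?thesis
    unfolding palm_iff
  proof
    assume all_finite: "\<forall>L>0. \<forall>z. (\<integral>\<^sup>+\<xi>. palm_sum \<gamma> (Lambda_box L z) \<xi> \<partial>P) < \<infinity>"
    have "(\<integral>\<^sup>+\<xi>. palm_sum \<gamma> (Lambda_box 1 (0::'a)) \<xi> \<partial>P) < \<infinity>"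
      by (rule all_finite[rule_format]) simp
    with rho_le_nn_integral_palm_sum[OF assms(2) less_imp_le[OF assms(7)]]
    show "rho P (1 + \<gamma>) < \<infinity>"
      by (rule le_less_trans)
  next
    assume "rho P (1 + \<gamma>) < \<infinity>"
    then show "\<forall>L>0. \<forall>z. (\<integral>\<^sup>+\<xi>. palm_sum \<gamma> (Lambda_box L z) \<xi> \<partial>P) < \<infinity>"
      using nn_integral_palm_sum_Lambda_box_less_top[OF assms(2,4) less_imp_le[OF assms(7)]]
      by blast
  qed
qed

end
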